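(* Every quantum graph $G$ has a code of dimension at least $\lceil |G|/(\|G\|+1)^2\rceil$.
   Context: A quantum graph $G$ consists of a finite-dimensional complex inner product space $V(G)$ and a real vector space $E(G)$ of self-adjoint operators on $V(G)$ containing the identity $I$; write $|G|=\dim V(G)$ and $\|G\|=\dim E(G)-1$. A code of $G$ is a subspace $C\subseteq V(G)$ such that there is a function $\epsilon_C:E(G)\to\mathbb{R}$ with $P_CAP_C=\epsilon_C(A)P_C$ for all $A\in E(G)$, where $P_C$ is the orthogonal projection onto $C$. *)

theory Defs
  imports "HOL-Analysis.Analysis"
begin

text \<open>V(G) is modelled as the standard complex inner product space complex^'n
  (every finite-dimensional complex inner product space is isometric to one of these);
  operators on V(G) are matrices complex^'n^'n.\<close>

definition cinner :: "complex ^ 'n \<Rightarrow> complex ^ 'n \<Rightarrow> complex" where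
  "cinner x y = (\<Sum>i\<in>UNIV. cnj (x $ i) * y $ i)"

definition adjoint_mat :: "complex ^ 'n ^ 'n \<Rightarrow> complex ^ 'n ^ 'n" where
  "adjoint_mat A = (\<chi> i j. cnj (A $ j $ i))"

definition self_adjoint :: "complex ^ 'n ^ 'n \<Rightarrow> bool" where
  "self_adjoint A \<longleftrightarrow> adjoint_mat A = A"

definition csubspace :: "(complex ^ 'n) set \<Rightarrow> bool" where
  "csubspace C \<longleftrightarrow> 0 \<in> C \<and> (\<forall>x\<in>C. \<forall>y\<in>C. x + y \<in> C) \<and> (\<forall>c. \<forall>x\<in>C. c *s x \<in> C)"

definition cspan :: "(complex ^ 'n) set \<Rightarrow> (complex ^ 'n) set" where
  "cspan S = {x. \<exists>T c. finite T \<and> T \<subseteq> S \<and> x = (\<Sum>v\<in>T. c v *s v)}"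

definition cdim :: "(complex ^ 'n) set \<Rightarrow> nat" where
  "cdim C = (LEAST k. \<exists>B. finite B \<and> card B = k \<and> cspan B = C)"

definition is_orth_proj :: "(complex ^ 'n) set \<Rightarrow> complex ^ 'n ^ 'n \<Rightarrow> bool" where
  "is_orth_proj C P \<longleftrightarrow> (\<forall>x. P *v x \<in> C \<and> (\<forall>y\<in>C. cinner y (x - P *v x) = 0))"

definition orth_proj :: "(complex ^ 'n) set \<Rightarrow> complex ^ 'n ^ 'n" where
  "orth_proj C = (THE P. is_orth_proj C P)"

text \<open>A quantum graph on V = complex^'n: a real subspace E of self-adjoint operators containing I.
  |G| = CARD('n), ||G|| = dim E - 1 (dim = real dimension).\<close>

definition quantum_graph :: "(complex ^ 'n ^ 'n) set \<Rightarrow> bool" where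
  "quantum_graph E \<longleftrightarrow> subspace E \<and> (\<forall>A\<in>E. self_adjoint A) \<and> mat 1 \<in> E"

definition is_code :: "(complex ^ 'n ^ 'n) set \<Rightarrow> (complex ^ 'n) set \<Rightarrow> bool" where
  "is_code E C \<longleftrightarrow> csubspace C \<and>
     (\<exists>\<epsilon> :: complex ^ 'n ^ 'n \<Rightarrow> real. \<forall>A\<in>E.
        orth_proj C ** A ** orth_proj C = \<epsilon> A *\<^sub>R orth_proj C)"

end

theory Submission
  imports Defs
begin

text \<open>
  Let \<open>d = dim E\<close>, \<open>n = CARD('n)\<close>, \<open>k = \<lceil>n / d\<^sup>2\<rceil>\<close> and fix a real basis \<open>B\<^sub>0, \<dots>, B\<^sub>d\<^sub>-\<^sub>1\<close> of \<open>E\<close>.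
  Greedily choose \<open>r = (k - 1) d + 1\<close> unit vectors \<open>w\<^sub>j\<close>, each orthogonal to all \<open>B\<^sub>l w\<^sub>i\<close> with
  \<open>i < j\<close>; this is possible because \<open>d (r - 1) < n\<close>, and by self-adjointness every \<open>A \<in> E\<close> then
  has vanishing off-diagonal entries \<open>\<langle>w\<^sub>i, A w\<^sub>j\<rangle>\<close>. Expanding the identity in the basis shows that
  the diagonals \<open>(\<langle>w\<^sub>j, B\<^sub>l w\<^sub>j\<rangle>)\<^sub>l\<close> are \<open>r\<close> points of \<open>\<real>\<^sup>d\<close> on one affine hyperplane, so
  Tverberg's theorem (proved via Sarkaria's lifting and the colorful Caratheodory theorem) splits
  them into \<open>k\<close> parts whose convex hulls meet. Combining the \<open>w\<^sub>j\<close> of each part with the square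
  roots of the corresponding convex weights gives \<open>k\<close> orthonormal vectors \<open>v\<^sub>q\<close> with
  \<open>\<langle>v\<^sub>q, A v\<^sub>q\<^sub>'\<rangle> = \<epsilon>(A) \<delta>\<^sub>q\<^sub>q\<^sub>'\<close> for all \<open>A \<in> E\<close>, so their span is a code of dimension \<open>k\<close>.
\<close>

section \<open>Colorful Caratheodory theorem\<close>

lemma convex_hull_image_weights:
  fixes c :: "'i \<Rightarrow> 'a::real_vector"
  assumes fin: "finite I" and y: "y \<in> convex hull (c ` I)"
  obtains \<mu> where "\<forall>i\<in>I. 0 \<le> \<mu> i" "sum \<mu> I = 1" "(\<Sum>i\<in>I. \<mu> i *\<^sub>R c i) = y"
proof -
  obtain u where u: "\<forall>x\<in>c ` I. 0 \<le> u x" "sum u (c ` I) = 1" "(\<Sum>x\<in>c ` I. u x *\<^sub>R x) = y"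
    using y fin by (auto simp: convex_hull_finite)
  \<comment> \<open>split the weight of each point evenly among the indices hitting it\<close>
  define \<mu> where "\<mu> i = u (c i) / card {j\<in>I. c j = c i}" for i
  have fibre: "(\<Sum>i\<in>{j\<in>I. c j = x}. \<mu> i) = u x" if "x \<in> c ` I" for x
  proof -
    have "card {j\<in>I. c j = x} > 0" using that fin by (auto simp: card_gt_0_iff)
    moreover have "(\<Sum>i\<in>{j\<in>I. c j = x}. \<mu> i) = (\<Sum>i\<in>{j\<in>I. c j = x}. u x / card {j\<in>I. c j = x})"
      by (rule sum.cong) (auto simp: \<mu>_def)
    ultimately show ?thesis by simp
  qed
  have "sum \<mu> I = (\<Sum>x\<in>c ` I. \<Sum>i\<in>{j\<in>I. c j = x}. \<mu> i)"
    by (rule sum.image_gen[OF fin])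
  also have "\<dots> = 1" using u(2) by (simp add: fibre)
  finally have "sum \<mu> I = 1" .
  have "(\<Sum>i\<in>I. \<mu> i *\<^sub>R c i) = (\<Sum>x\<in>c ` I. \<Sum>i\<in>{j\<in>I. c j = x}. \<mu> i *\<^sub>R c i)"
    by (rule sum.image_gen[OF fin])
  also have "\<dots> = (\<Sum>x\<in>c ` I. (\<Sum>i\<in>{j\<in>I. c j = x}. \<mu> i) *\<^sub>R x)"
    by (rule sum.cong[OF refl]) (simp add: scaleR_left.sum)
  also have "\<dots> = y" using u(3) by (simp add: fibre)
  finally show ?thesis
    by (rule that[rotated 2]) (use \<open>sum \<mu> I = 1\<close> u(1) in \<open>simp_all add: \<mu>_def\<close>)
qed

lemma closest_point_in_face:
  fixes c :: "'i \<Rightarrow> 'a::euclidean_space"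
  assumes fin: "finite I" and x: "x \<in> convex hull (c ` I)"
    and closest: "\<And>y. y \<in> convex hull (c ` I) \<Longrightarrow> norm x \<le> norm y"
  shows "x \<in> convex hull (c ` {i\<in>I. inner x (c i) = inner x x})"
proof -
  define J where "J = {i\<in>I. inner x (c i) = inner x x}"
  have "closed (convex hull (c ` I))"
    using fin by (simp add: compact_imp_closed compact_convex_hull finite_imp_compact)
  have above: "inner x x \<le> inner x (c i)" if "i \<in> I" for i
  proof -
    have "inner (0 - x) (c i - x) \<le> 0"
      using any_closest_point_dot[OF convex_convex_hull \<open>closed _\<close> x, of "c i" 0] that closest
      by (simp add: hull_inc dist_norm)
    then show ?thesis by (simp add: inner_diff_right)
  qed
  obtain \<mu> where \<mu>: "\<forall>i\<in>I. 0 \<le> \<mu> i" "sum \<mu> I = 1" "(\<Sum>i\<in>I. \<mu> i *\<^sub>R c i) = x"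
    using convex_hull_image_weights[OF fin x] by blast
  have "(\<Sum>i\<in>I. \<mu> i * (inner x (c i) - inner x x)) = inner x (\<Sum>i\<in>I. \<mu> i *\<^sub>R c i) - sum \<mu> I * inner x x"
    by (simp add: right_diff_distrib sum_subtractf inner_sum_right sum_distrib_right)
  also have "\<dots> = 0" using \<mu>(2,3) by simp
  finally have "\<forall>i\<in>I. \<mu> i * (inner x (c i) - inner x x) = 0"
    using sum_nonneg_eq_0_iff[OF fin, of "\<lambda>i. \<mu> i * (inner x (c i) - inner x x)"] \<mu>(1) above
    by (simp add: mult_nonneg_nonneg)
  then have off_J: "\<mu> i = 0" if "i \<in> I - J" for i using that by (auto simp: J_def)
  have JI: "J \<subseteq> I" by (auto simp: J_def)
  have "sum \<mu> J = 1" "(\<Sum>i\<in>J. \<mu> i *\<^sub>R c i) = x"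
    using \<mu>(2,3) sum.mono_neutral_left[OF fin JI, of \<mu>]
      sum.mono_neutral_left[OF fin JI, of "\<lambda>i. \<mu> i *\<^sub>R c i"] off_J by auto
  then show ?thesis unfolding J_def[symmetric]
    using convex_sum[OF finite_subset[OF JI fin] convex_convex_hull, of \<mu> c "c ` J"] \<mu>(1) JI
    by (auto intro: hull_inc)
qed

lemma caratheodory_subspace_avoiding_origin:
  fixes P :: "'a::euclidean_space set"
  assumes "subspace S" "P \<subseteq> S" "0 \<notin> affine hull P" "x \<in> convex hull P"
  obtains F where "finite F" "F \<subseteq> P" "card F \<le> dim S" "x \<in> convex hull F"
proof -
  obtain F where F: "finite F" "F \<subseteq> P" "card F \<le> aff_dim P + 1" "x \<in> convex hull F"
    using caratheodory_aff_dim[of P] assms(4) by blast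
  have "aff_dim P + 1 = aff_dim (insert 0 P)" using aff_dim_insert[of 0 P] assms(3) by simp
  also have "\<dots> = dim (insert 0 P)" by (simp add: aff_dim_zero hull_inc)
  finally have "card F \<le> dim (insert 0 P)" using F(3) by linarith
  also have "\<dots> \<le> dim S" by (rule dim_subset) (use assms(1,2) subspace_0 in blast)
  finally show ?thesis using that F by blast
qed

lemma subset_image_avoiding_index:
  assumes "F \<subseteq> c ` I" "finite I" "card F < card I"
  obtains i where "i \<in> I" "F \<subseteq> c ` (I - {i})"
proof -
  obtain J where J: "J \<subseteq> I" "inj_on c J" "F = c ` J"
    using assms(1) subset_image_inj by metis
  then have "card J < card I" using assms(3) by (simp add: card_image)
  moreover have "card I \<le> card J" if "I \<subseteq> J"
    using card_mono[OF finite_subset[OF J(1) assms(2)] that] .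
  ultimately obtain i where "i \<in> I" "i \<notin> J" by force
  then show ?thesis using that J by blast
qed

lemma closest_point_avoids_index:
  fixes c :: "nat \<Rightarrow> 'a::euclidean_space"
  assumes S: "subspace S" "dim S < r" and cS: "\<forall>i<r. c i \<in> S"
    and x: "x \<in> convex hull (c ` {..<r})" "x \<noteq> 0"
    and closest: "\<And>y. y \<in> convex hull (c ` {..<r}) \<Longrightarrow> norm x \<le> norm y"
  obtains i0 where "i0 < r" "x \<in> convex hull (c ` ({..<r} - {i0}))"
proof -
  define J where "J = {i\<in>{..<r}. inner x (c i) = inner x x}"
  have face: "x \<in> convex hull (c ` J)"
    unfolding J_def by (rule closest_point_in_face[OF finite_lessThan x(1) closest])
  have hyperplane: "affine hull (c ` J) \<subseteq> {y. inner x y = inner x x}"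
    by (rule hull_minimal) (auto simp: J_def affine_hyperplane)
  have off_origin: "0 \<notin> affine hull (c ` J)"
  proof
    assume "0 \<in> affine hull (c ` J)"
    then have "inner x 0 = inner x x" using hyperplane by blast
    then show False using x(2) by simp
  qed
  have "c ` J \<subseteq> S" using cS by (auto simp: J_def)
  then obtain F where F: "finite F" "F \<subseteq> c ` J" "card F \<le> dim S" "x \<in> convex hull F"
    by (rule caratheodory_subspace_avoiding_origin[OF S(1) _ off_origin face])
  have "F \<subseteq> c ` {..<r}" using F(2) by (auto simp: J_def)
  moreover have "card F < card {..<r}" using F(3) S(2) by simp
  ultimately obtain i0 where i0: "i0 \<in> {..<r}" "F \<subseteq> c ` ({..<r} - {i0})"
    by (rule subset_image_avoiding_index[OF _ finite_lessThan])
  then show ?thesis using that F(4) hull_mono by blast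
qed

lemma convex_closer_to_origin:
  fixes x z :: "'a::real_inner"
  assumes K: "convex K" "x \<in> K" "z \<in> K" and x: "x \<noteq> 0" and z: "inner x z \<le> 0"
  obtains y where "y \<in> K" "norm y < norm x"
proof -
  have "inner (0 - x) (z - x) = inner x x - inner x z"
    by (simp add: inner_diff_left inner_diff_right inner_commute)
  moreover have "0 < inner x x" using x by simp
  ultimately have "inner (0 - x) (z - x) > 0" using z by linarith
  then obtain u where u: "0 < u" "u \<le> 1" "dist (x + u *\<^sub>R (z - x)) 0 < dist x 0"
    using closer_point_lemma by blast
  have "x + u *\<^sub>R (z - x) = (1 - u) *\<^sub>R x + u *\<^sub>R z" by (simp add: algebra_simps)
  then have "x + u *\<^sub>R (z - x) \<in> K" using convexD[OF K, of "1 - u" u] u by simp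
  then show ?thesis using that u(3) by (simp add: dist_norm)
qed

lemma colorful_caratheodory_step:
  fixes c :: "nat \<Rightarrow> 'a::euclidean_space"
  assumes S: "subspace S" "dim S < r" and sub: "\<And>i. i < r \<Longrightarrow> C i \<subseteq> S"
    and zero: "\<And>i. i < r \<Longrightarrow> 0 \<in> convex hull (C i)"
    and c: "\<forall>i<r. c i \<in> C i"
    and x: "x \<in> convex hull (c ` {..<r})" "x \<noteq> 0"
    and closest: "\<And>y. y \<in> convex hull (c ` {..<r}) \<Longrightarrow> norm x \<le> norm y"
  obtains c' y where "\<forall>i<r. c' i \<in> C i" "y \<in> convex hull (c' ` {..<r})" "norm y < norm x"
proof -
  have "\<forall>i<r. c i \<in> S" using c sub by blast
  then obtain i0 where i0: "i0 < r" "x \<in> convex hull (c ` ({..<r} - {i0}))"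
    by (rule closest_point_avoids_index[OF S _ x closest])
  obtain z where z: "z \<in> C i0" "inner x z \<le> 0"
  proof -
    have "\<not> C i0 \<subseteq> {y. inner x y > 0}"
    proof
      assume "C i0 \<subseteq> {y. inner x y > 0}"
      then have "convex hull (C i0) \<subseteq> {y. inner x y > 0}"
        by (rule hull_minimal) (rule convex_halfspace_gt)
      then show False using zero[OF i0(1)] by auto
    qed
    then obtain z where "z \<in> C i0" "\<not> inner x z > 0" by blast
    then show ?thesis using that by (simp add: not_less)
  qed
  define c' where "c' = c(i0 := z)"
  have "c ` ({..<r} - {i0}) \<subseteq> c' ` {..<r}" by (auto simp: c'_def)
  then have "x \<in> convex hull (c' ` {..<r})" using i0(2) hull_mono by blast
  moreover have "z \<in> convex hull (c' ` {..<r})"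
    by (rule hull_inc) (use i0(1) in \<open>auto simp: c'_def\<close>)
  ultimately obtain y where "y \<in> convex hull (c' ` {..<r})" "norm y < norm x"
    using convex_closer_to_origin[OF convex_convex_hull _ _ x(2) z(2)] by blast
  moreover have "\<forall>i<r. c' i \<in> C i" using c z(1) by (simp add: c'_def)
  ultimately show ?thesis using that by blast
qed

lemma colorful_caratheodory:
  fixes C :: "nat \<Rightarrow> 'a::euclidean_space set"
  assumes S: "subspace S" "dim S < r" and fin: "\<And>i. i < r \<Longrightarrow> finite (C i)"
    and sub: "\<And>i. i < r \<Longrightarrow> C i \<subseteq> S" and zero: "\<And>i. i < r \<Longrightarrow> 0 \<in> convex hull (C i)"
  obtains c where "\<forall>i<r. c i \<in> C i" "0 \<in> convex hull (c ` {..<r})"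
proof -
  define T where "T = PiE {..<r} C"
  define f where "f c = infdist 0 (convex hull (c ` {..<r}))" for c :: "nat \<Rightarrow> 'a"
  have "finite T" unfolding T_def using fin by (intro finite_PiE) auto
  moreover have "C i \<noteq> {}" if "i < r" for i using zero[OF that] by auto
  then have "T \<noteq> {}" unfolding T_def by (auto simp: PiE_eq_empty_iff)
  ultimately obtain c where cT: "c \<in> T" and cmin: "\<And>c'. c' \<in> T \<Longrightarrow> f c \<le> f c'"
    using arg_min_if_finite[of T f] by (auto simp: not_less)
  have cC: "\<forall>i<r. c i \<in> C i" using cT by (auto simp: T_def)
  define K where "K = convex hull (c ` {..<r})"
  have "closed K" unfolding K_def
    by (simp add: compact_imp_closed compact_convex_hull finite_imp_compact)
  moreover have "K \<noteq> {}" unfolding K_def using S(2) by auto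
  ultimately obtain x where xK: "x \<in> K" and fx: "f c = norm x"
    using infdist_attains_inf[of K 0] unfolding f_def K_def by (auto simp: dist_norm)
  have closest: "norm x \<le> norm y" if "y \<in> K" for y
    using infdist_le[OF that, of 0] fx unfolding f_def K_def by (simp add: dist_norm)
  show ?thesis
  proof (cases "x = 0")
    case True
    then show ?thesis using that cC xK unfolding K_def by blast
  next
    case False
    then obtain c' y where c': "\<forall>i<r. c' i \<in> C i" and y: "y \<in> convex hull (c' ` {..<r})" "norm y < norm x"
      using colorful_caratheodory_step[OF S sub zero cC xK[unfolded K_def] False closest[unfolded K_def]]
      by blast
    have "restrict c' {..<r} \<in> T" using c' by (simp add: T_def)
    moreover have "f (restrict c' {..<r}) \<le> norm y"
      using infdist_le[OF y(1), of 0] unfolding f_def by (simp add: dist_norm image_restrict_eq)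
    ultimately have "f c \<le> norm y" using cmin by (meson order_trans)
    then show ?thesis using y(2) fx by simp
  qed
qed

lemma colorful_caratheodory_indexed:
  fixes L :: "nat \<Rightarrow> nat \<Rightarrow> 'a::euclidean_space"
  assumes S: "subspace S" "dim S < r" and L: "\<And>j p. L j p \<in> S"
    and zero: "\<And>j. j < r \<Longrightarrow> 0 \<in> convex hull (L j ` {..<m})"
  obtains p \<mu> where "\<forall>j<r. p j < m \<and> 0 \<le> \<mu> j" "sum \<mu> {..<r} = 1" "(\<Sum>j<r. \<mu> j *\<^sub>R L j (p j)) = 0"
proof -
  obtain c where c: "\<forall>j<r. c j \<in> L j ` {..<m}" "0 \<in> convex hull (c ` {..<r})"
    using colorful_caratheodory[OF S, of "\<lambda>j. L j ` {..<m}"] L zero by blast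
  have "\<exists>p. p < m \<and> c j = L j p" if "j < r" for j
    using c(1) that by (auto simp: image_iff)
  then have "\<forall>j. \<exists>p. j < r \<longrightarrow> p < m \<and> c j = L j p" by blast
  then obtain p where p: "\<forall>j. j < r \<longrightarrow> p j < m \<and> c j = L j (p j)"
    by (rule choice[THEN exE])
  obtain \<mu> where \<mu>: "\<forall>j\<in>{..<r}. 0 \<le> \<mu> j" "sum \<mu> {..<r} = 1" "(\<Sum>j<r. \<mu> j *\<^sub>R c j) = 0"
    using convex_hull_image_weights[OF finite_lessThan c(2)] by blast
  have "(\<Sum>j<r. \<mu> j *\<^sub>R L j (p j)) = (\<Sum>j<r. \<mu> j *\<^sub>R c j)"
    using p by (intro sum.cong) auto
  then show ?thesis using that[of p \<mu>] p \<mu> by simp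
qed

section \<open>Tverberg's theorem via Sarkaria's lifting\<close>

text \<open>\<open>sarkaria_vector K p q\<close> is coordinate \<open>q\<close> of the \<open>p\<close>-th of the \<open>K + 1\<close> vectors
  \<open>e\<^sub>0, \<dots>, e\<^sub>K\<^sub>-\<^sub>1, -(e\<^sub>0 + \<dots> + e\<^sub>K\<^sub>-\<^sub>1)\<close> of \<open>\<real>\<^sup>K\<close>, which sum to zero.\<close>

definition sarkaria_vector :: "nat \<Rightarrow> nat \<Rightarrow> nat \<Rightarrow> real" where
  "sarkaria_vector K p q = (if p = q then 1 else if p = K then -1 else 0)"

lemma sum_sarkaria_vector:
  assumes "q < K"
  shows "(\<Sum>p<Suc K. sarkaria_vector K p q) = 0"
proof -
  have "(\<Sum>p<K. sarkaria_vector K p q) = (\<Sum>p<K. if p = q then 1 else 0)"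
    by (rule sum.cong) (auto simp: sarkaria_vector_def)
  then show ?thesis using assms by (simp add: sarkaria_vector_def)
qed

text \<open>The type \<open>'i\<close> only provides an ambient Euclidean space with at least \<open>d K\<close> coordinates.\<close>

lemma sarkaria_colorful_choice:
  fixes a :: "nat \<Rightarrow> nat \<Rightarrow> real"
  assumes r: "K * d < r" and card: "d * K \<le> CARD('i::finite)"
  obtains p \<mu> where "\<forall>j<r. p j < Suc K \<and> 0 \<le> \<mu> j" "sum \<mu> {..<r} = 1"
    "\<And>l q. l < d \<Longrightarrow> q < K \<Longrightarrow> (\<Sum>j<r. \<mu> j * (a j l * sarkaria_vector K (p j) q)) = 0"
proof -
  define D where "D = {..<d} \<times> {..<K}"
  obtain e :: "nat \<times> nat \<Rightarrow> 'i" where e: "inj_on e D"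
    using card_le_inj[of D "UNIV :: 'i set"] card by (auto simp: D_def)
  \<comment> \<open>Sarkaria's lifting: with \<open>u p = sarkaria_vector K p\<close>, the point \<open>a j\<close> becomes the \<open>K + 1\<close>
     tensors \<open>a j \<otimes> u p\<close>, written in the coordinates \<open>e ` D\<close> of \<open>real^'i\<close>; their average is \<open>0\<close>\<close>
  define lift where "lift j p = (\<chi> i. if i \<in> e ` D
      then a j (fst (inv_into D e i)) * sarkaria_vector K p (snd (inv_into D e i)) else 0)" for j p
  define S where "S = {x::real^'i. \<forall>i. i \<notin> e ` D \<longrightarrow> x $ i = 0}"
  have "subspace S" by (auto simp: S_def subspace_def)
  have "dim S = card (e ` D)" using dim_substandard_cart[where 'a = real, of "e ` D"] by (simp add: S_def dim_vec_eq)
  also have "\<dots> \<le> card D" by (rule card_image_le) (simp add: D_def)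
  also have "\<dots> < r" using r by (simp add: D_def mult.commute)
  finally have dimS: "dim S < r" .
  have lift_S: "lift j p \<in> S" for j p by (simp add: S_def lift_def)
  have lift_avg: "(\<Sum>p<Suc K. (1 / real (Suc K)) *\<^sub>R lift j p) = 0" for j
  proof -
    have "(\<Sum>p<Suc K. (1 / real (Suc K)) *\<^sub>R lift j p) $ i = 0" for i
    proof (cases "i \<in> e ` D")
      case True
      then have "snd (inv_into D e i) < K" using inv_into_into[OF True] by (auto simp: D_def)
      then show ?thesis
        using True
        by (simp add: lift_def sum_sarkaria_vector del: sum.lessThan_Suc
            flip: sum_divide_distrib sum_distrib_left)
    qed (simp add: lift_def)
    then show ?thesis by (simp add: vec_eq_iff)
  qed
  have "0 \<in> convex hull (lift j ` {..<Suc K})" for j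
  proof -
    have "(\<Sum>p<Suc K. (1 / real (Suc K)) *\<^sub>R lift j p) \<in> convex hull (lift j ` {..<Suc K})"
      by (rule convex_sum[OF finite_lessThan convex_convex_hull]) (auto intro: hull_inc)
    then show ?thesis by (simp only: lift_avg)
  qed
  then obtain p \<mu> where p\<mu>: "\<forall>j<r. p j < Suc K \<and> 0 \<le> \<mu> j" "sum \<mu> {..<r} = 1"
    and zero: "(\<Sum>j<r. \<mu> j *\<^sub>R lift j (p j)) = 0"
    by (rule colorful_caratheodory_indexed[OF \<open>subspace S\<close> dimS lift_S])
  have "(\<Sum>j<r. \<mu> j * (a j l * sarkaria_vector K (p j) q)) = 0" if "l < d" "q < K" for l q
  proof -
    have "(l, q) \<in> D" using that by (simp add: D_def)
    then have "(\<Sum>j<r. \<mu> j *\<^sub>R lift j (p j)) $ e (l, q) = (\<Sum>j<r. \<mu> j * (a j l * sarkaria_vector K (p j) q))"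
      using e by (simp add: lift_def)
    then show ?thesis using zero by simp
  qed
  then show ?thesis using that p\<mu> by blast
qed

lemma sarkaria_tverberg:
  fixes a :: "nat \<Rightarrow> nat \<Rightarrow> real"
  assumes k: "1 \<le> k" and r: "(k - 1) * d < r" and card: "d * (k - 1) \<le> CARD('i::finite)"
  obtains p \<mu> where "\<forall>j<r. p j < k \<and> 0 \<le> \<mu> j" "sum \<mu> {..<r} = 1"
    "\<forall>q<k. \<forall>l<d. (\<Sum>j\<in>{j\<in>{..<r}. p j = q}. \<mu> j * a j l) = (\<Sum>j\<in>{j\<in>{..<r}. p j = 0}. \<mu> j * a j l)"
proof -
  define K where "K = k - 1"
  have kK: "k = Suc K" using k by (simp add: K_def)
  have "K * d < r" using r by (simp add: K_def)
  then obtain p \<mu> where p: "\<forall>j<r. p j < Suc K \<and> 0 \<le> \<mu> j" and \<mu>: "sum \<mu> {..<r} = 1"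
    and coord: "\<And>l q. l < d \<Longrightarrow> q < K \<Longrightarrow> (\<Sum>j<r. \<mu> j * (a j l * sarkaria_vector K (p j) q)) = 0"
    using sarkaria_colorful_choice[of K d r, OF _ card[folded K_def]] by blast
  define Y where "Y q l = (\<Sum>j\<in>{j\<in>{..<r}. p j = q}. \<mu> j * a j l)" for q l
  \<comment> \<open>with \<open>u = sarkaria_vector K\<close>, \<open>coord\<close> says \<open>\<Sum>\<^sub>q Y q \<otimes> u q = 0\<close>, whose coordinate \<open>(l, q)\<close>
     is \<open>Y q l - Y K l\<close>\<close>
  have Y_K: "Y q l = Y K l" if "q < k" "l < d" for q l
  proof (cases "q = K")
    case False
    with that have "q < K" by (simp add: K_def)
    have "(\<Sum>j<r. \<mu> j * (a j l * sarkaria_vector K (p j) q))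
        = (\<Sum>j<r. (if p j = q then \<mu> j * a j l else 0) - (if p j = K then \<mu> j * a j l else 0))"
      using \<open>q < K\<close> by (intro sum.cong) (auto simp: sarkaria_vector_def)
    also have "\<dots> = Y q l - Y K l"
      unfolding Y_def sum.inter_filter[OF finite_lessThan] by (simp add: sum_subtractf)
    finally show ?thesis using coord[OF that(2) \<open>q < K\<close>] by simp
  qed simp
  have "Y q l = Y 0 l" if "q < k" "l < d" for q l
    using Y_K[OF that] Y_K[OF _ that(2), of 0] k by simp
  then show ?thesis
    using that[of p \<mu>] p \<mu> kK unfolding Y_def by blast
qed

lemma hyperplane_balanced_masses:
  fixes a :: "nat \<Rightarrow> nat \<Rightarrow> real"
  assumes hyperplane: "\<And>j. j < r \<Longrightarrow> (\<Sum>l<d. \<gamma> l * a j l) = 1"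
    and bal: "\<forall>q<k. \<forall>l<d. (\<Sum>j\<in>{j\<in>{..<r}. p j = q}. \<mu> j * a j l) = (\<Sum>j\<in>{j\<in>{..<r}. p j = 0}. \<mu> j * a j l)"
  shows "\<forall>q<k. sum \<mu> {j\<in>{..<r}. p j = q} = sum \<mu> {j\<in>{..<r}. p j = 0}"
proof -
  define G where "G q = {j\<in>{..<r}. p j = q}" for q
  \<comment> \<open>on the hyperplane the mass of a part is a linear function of its weighted sum\<close>
  have mass: "sum \<mu> (G q) = (\<Sum>l<d. \<gamma> l * (\<Sum>j\<in>G q. \<mu> j * a j l))" for q
  proof -
    have "sum \<mu> (G q) = (\<Sum>j\<in>G q. \<mu> j * (\<Sum>l<d. \<gamma> l * a j l))"
      by (rule sum.cong) (auto simp: G_def hyperplane)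
    also have "\<dots> = (\<Sum>l<d. \<gamma> l * (\<Sum>j\<in>G q. \<mu> j * a j l))"
      by (simp add: sum_distrib_left sum.swap[of _ "G q"] mult.left_commute)
    finally show ?thesis .
  qed
  have "sum \<mu> (G q) = sum \<mu> (G 0)" if "q < k" for q
  proof -
    have "(\<Sum>j\<in>G q. \<mu> j * a j l) = (\<Sum>j\<in>G 0. \<mu> j * a j l)" if "l < d" for l
      unfolding G_def using bal \<open>q < k\<close> that by blast
    then show ?thesis unfolding mass by (intro sum.cong) simp_all
  qed
  then show ?thesis unfolding G_def by blast
qed

lemma tverberg_hyperplane:
  fixes a :: "nat \<Rightarrow> nat \<Rightarrow> real" and \<gamma> :: "nat \<Rightarrow> real"
  assumes k: "1 \<le> k" and r: "(k - 1) * d < r" and card: "d * (k - 1) \<le> CARD('i::finite)"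
    and hyperplane: "\<And>j. j < r \<Longrightarrow> (\<Sum>l<d. \<gamma> l * a j l) = 1"
  obtains p \<nu> where "\<forall>j<r. p j < k \<and> 0 \<le> \<nu> j" "\<forall>q<k. (\<Sum>j\<in>{j\<in>{..<r}. p j = q}. \<nu> j) = 1"
    "\<forall>q<k. \<forall>l<d. (\<Sum>j\<in>{j\<in>{..<r}. p j = q}. \<nu> j * a j l) = (\<Sum>j\<in>{j\<in>{..<r}. p j = 0}. \<nu> j * a j l)"
proof -
  obtain p \<mu> where p: "\<forall>j<r. p j < k \<and> 0 \<le> \<mu> j" and \<mu>: "sum \<mu> {..<r} = 1"
    and bal: "\<forall>q<k. \<forall>l<d. (\<Sum>j\<in>{j\<in>{..<r}. p j = q}. \<mu> j * a j l) = (\<Sum>j\<in>{j\<in>{..<r}. p j = 0}. \<mu> j * a j l)"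
    using sarkaria_tverberg[OF k r card] by blast
  define G where "G q = {j\<in>{..<r}. p j = q}" for q
  have equal: "sum \<mu> (G q) = sum \<mu> (G 0)" if "q < k" for q
    using hyperplane_balanced_masses[OF hyperplane bal] that unfolding G_def by blast
  have "p ` {..<r} \<subseteq> {..<k}" using p by auto
  then have "sum \<mu> {..<r} = (\<Sum>q<k. sum \<mu> (G q))"
    unfolding G_def by (rule sum.group[OF finite_lessThan finite_lessThan, symmetric])
  also have "\<dots> = (\<Sum>q<k. sum \<mu> (G 0))" by (intro sum.cong refl equal) simp
  finally have total: "real k * sum \<mu> (G 0) = 1" using \<mu> by simp
  show ?thesis
  proof (rule that[of p "\<lambda>j. real k * \<mu> j"])
    show "\<forall>j<r. p j < k \<and> 0 \<le> real k * \<mu> j" using p by simp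
    show "\<forall>q<k. (\<Sum>j\<in>{j\<in>{..<r}. p j = q}. real k * \<mu> j) = 1"
    proof (intro allI impI)
      fix q assume "q < k"
      then have "sum \<mu> (G q) = sum \<mu> (G 0)" by (rule equal)
      then show "(\<Sum>j\<in>{j\<in>{..<r}. p j = q}. real k * \<mu> j) = 1"
        using total by (simp add: G_def flip: sum_distrib_left)
    qed
    show "\<forall>q<k. \<forall>l<d. (\<Sum>j\<in>{j\<in>{..<r}. p j = q}. real k * \<mu> j * a j l)
        = (\<Sum>j\<in>{j\<in>{..<r}. p j = 0}. real k * \<mu> j * a j l)"
    proof (intro allI impI)
      fix q l assume "q < k" "l < d"
      then have "(\<Sum>j\<in>{j\<in>{..<r}. p j = q}. \<mu> j * a j l) = (\<Sum>j\<in>{j\<in>{..<r}. p j = 0}. \<mu> j * a j l)"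
        using bal by blast
      then show "(\<Sum>j\<in>{j\<in>{..<r}. p j = q}. real k * \<mu> j * a j l)
          = (\<Sum>j\<in>{j\<in>{..<r}. p j = 0}. real k * \<mu> j * a j l)"
        by (simp add: mult.assoc flip: sum_distrib_left)
    qed
  qed
qed

section \<open>Complex inner product and self-adjoint matrices\<close>

lemma cinner_add_right: "cinner x (y + z) = cinner x y + cinner x z"
  by (simp add: cinner_def distrib_left sum.distrib)

lemma cinner_diff_right: "cinner x (y - z) = cinner x y - cinner x z"
  by (simp add: cinner_def right_diff_distrib sum_subtractf)

lemma cinner_smult_right: "cinner x (c *s y) = c * cinner x y"
  by (simp add: cinner_def sum_distrib_left algebra_simps)

lemma cinner_smult_left: "cinner (c *s x) y = cnj c * cinner x y"
  by (simp add: cinner_def sum_distrib_left algebra_simps)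

lemma cinner_scaleR_right: "cinner x (r *\<^sub>R y) = r *\<^sub>R cinner x y"
  by (simp add: cinner_def scaleR_sum_right)

lemma cinner_zero_right [simp]: "cinner x 0 = 0"
  by (simp add: cinner_def)

lemma cinner_sum_right: "cinner x (\<Sum>i\<in>I. f i) = (\<Sum>i\<in>I. cinner x (f i))"
  by (induct I rule: infinite_finite_induct) (simp_all add: cinner_add_right)

lemma cinner_sum_left: "cinner (\<Sum>i\<in>I. f i) y = (\<Sum>i\<in>I. cinner (f i) y)"
  by (induct I rule: infinite_finite_induct) (simp_all add: cinner_def distrib_right sum.distrib)

lemma cnj_cinner: "cnj (cinner x y) = cinner y x"
  by (simp add: cinner_def mult.commute)

lemma cinner_self: "cinner x x = complex_of_real ((norm x)\<^sup>2)"
proof -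
  have "(norm x)\<^sup>2 = (\<Sum>i\<in>UNIV. (norm (x $ i))\<^sup>2)"
    by (simp add: norm_vec_def L2_set_def sum_nonneg)
  then have "complex_of_real ((norm x)\<^sup>2) = (\<Sum>i\<in>UNIV. complex_of_real ((norm (x $ i))\<^sup>2))"
    by simp
  also have "\<dots> = cinner x x"
    unfolding cinner_def by (rule sum.cong[OF refl]) (simp only: complex_norm_square mult.commute)
  finally show ?thesis by simp
qed

lemma cinner_self_eq_0 [simp]: "cinner x x = 0 \<longleftrightarrow> x = 0"
  by (simp add: cinner_self)

lemma Re_cinner: "Re (cinner x y) = inner x y"
  by (simp add: inner_vec_def cinner_def inner_complex_def)

lemma Im_cinner: "Im (cinner x y) = inner (\<i> *s x) y"
  by (simp add: inner_vec_def cinner_def inner_complex_def algebra_simps)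

lemma matrix_vector_mult_sum: "A *v (\<Sum>i\<in>I. f i) = (\<Sum>i\<in>I. A *v f i)"
  by (induct I rule: infinite_finite_induct) (simp_all add: matrix_vector_right_distrib)

lemma sum_matrix_vector_mult: "(\<Sum>i\<in>I. M i) *v x = (\<Sum>i\<in>I. M i *v x)"
  by (induct I rule: infinite_finite_induct) (simp_all add: matrix_vector_mult_add_rdistrib)

lemma scaleR_matrix_vector_mult: "(r *\<^sub>R A) *v x = r *\<^sub>R (A *v (x :: complex^'n))"
  by (simp add: vec_eq_iff matrix_vector_mult_def scaleR_sum_right)

lemma scaleR_vec_eq_smult: "r *\<^sub>R x = complex_of_real r *s (x :: complex^'n)"
  by (simp add: vec_eq_iff complex_eq_iff)

lemma self_adjoint_cinner:
  assumes "self_adjoint A"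
  shows "cinner x (A *v y) = cinner (A *v x) y"
proof -
  have A: "cnj (A $ j $ i) = A $ i $ j" for i j
    using assms unfolding self_adjoint_def adjoint_mat_def by (metis vec_lambda_beta)
  have "cinner x (A *v y) = (\<Sum>i\<in>UNIV. \<Sum>j\<in>UNIV. cnj (x $ i) * (A $ i $ j * y $ j))"
    by (simp add: cinner_def matrix_vector_mult_def sum_distrib_left)
  also have "\<dots> = (\<Sum>j\<in>UNIV. \<Sum>i\<in>UNIV. cnj (x $ i) * (A $ i $ j * y $ j))"
    by (rule sum.swap)
  also have "\<dots> = (\<Sum>j\<in>UNIV. \<Sum>i\<in>UNIV. cnj (A $ j $ i) * cnj (x $ i) * y $ j)"
    by (simp add: A algebra_simps)
  also have "\<dots> = cinner (A *v x) y"
    by (simp add: cinner_def matrix_vector_mult_def sum_distrib_right)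
  finally show ?thesis .
qed

lemma self_adjoint_cinner_real:
  assumes "self_adjoint A"
  shows "cinner x (A *v x) = complex_of_real (Re (cinner x (A *v x)))"
  using cnj_cinner[of x "A *v x"] self_adjoint_cinner[OF assms, of x x]
  by (metis Reals_cnj_iff complex_is_Real_iff of_real_Re)

lemma exists_unit_orthogonal:
  fixes X :: "(complex^'n) set"
  assumes fin: "finite X" and card: "card X < CARD('n)"
  obtains w where "cinner w w = 1" "\<forall>x\<in>X. cinner x w = 0"
proof -
  \<comment> \<open>real orthogonality to \<open>x\<close> and \<open>\<i> x\<close> is complex orthogonality to \<open>x\<close>\<close>
  define Y where "Y = X \<union> (\<lambda>x. \<i> *s x) ` X"
  have "dim Y \<le> card Y" by (rule dim_le_card[OF span_superset]) (simp add: Y_def fin)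
  also have "\<dots> \<le> card X + card ((\<lambda>x. \<i> *s x) ` X)" unfolding Y_def by (rule card_Un_le)
  also have "\<dots> \<le> 2 * card X" using card_image_le[OF fin, of "\<lambda>x. \<i> *s x"] by simp
  finally have "dim Y < DIM(complex^'n)" using card by simp
  then obtain w0 where w0: "w0 \<noteq> 0" "\<And>y. y \<in> span Y \<Longrightarrow> orthogonal w0 y"
    using orthogonal_to_subspace_exists by blast
  have orth: "cinner x w0 = 0" if "x \<in> X" for x
  proof -
    have "orthogonal w0 x" "orthogonal w0 (\<i> *s x)"
      using w0(2) that by (auto simp: Y_def intro: span_base)
    then have "inner x w0 = 0" "inner (\<i> *s x) w0 = 0"
      by (auto simp: orthogonal_def inner_commute)
    then show ?thesis by (simp add: complex_eq_iff Re_cinner Im_cinner)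
  qed
  define w where "w = complex_of_real (1 / norm w0) *s w0"
  have "cinner w w = complex_of_real (1 / norm w0) * complex_of_real (1 / norm w0) * cinner w0 w0"
    by (simp add: w_def cinner_smult_left cinner_smult_right)
  also have "\<dots> = 1" using w0(1) by (simp add: cinner_self power2_eq_square flip: of_real_mult)
  finally have "cinner w w = 1" .
  moreover have "\<forall>x\<in>X. cinner x w = 0" by (simp add: w_def cinner_smult_right orth)
  ultimately show ?thesis by (rule that)
qed

lemma greedy_unit_vectors:
  fixes B :: "nat \<Rightarrow> complex^'n^'n"
  assumes "d * r < CARD('n) + d"
  shows "\<exists>w. (\<forall>i<r. cinner (w i) (w i) = 1) \<and> (\<forall>i<r. \<forall>i'<i. \<forall>l<d. cinner (B l *v w i') (w i) = 0)"
  using assms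
proof (induct r)
  case 0
  show ?case by simp
next
  case (Suc r)
  then obtain w where w: "\<forall>i<r. cinner (w i) (w i) = 1" "\<forall>i<r. \<forall>i'<i. \<forall>l<d. cinner (B l *v w i') (w i) = 0"
    by fastforce
  define X where "X = (\<lambda>(l, i'). B l *v w i') ` ({..<d} \<times> {..<r})"
  have "card X \<le> d * r" unfolding X_def by (metis card_image_le card_lessThan card_cartesian_product finite_SigmaI finite_lessThan)
  moreover have "d * r < CARD('n)" using Suc(2) by simp
  ultimately have "card X < CARD('n)" by linarith
  obtain u where u: "cinner u u = 1" "\<forall>x\<in>X. cinner x u = 0"
    by (rule exists_unit_orthogonal[OF _ \<open>card X < CARD('n)\<close>]) (simp add: X_def)
  have "\<forall>i<Suc r. \<forall>i'<i. \<forall>l<d. cinner (B l *v (w(r := u)) i') ((w(r := u)) i) = 0"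
    using w(2) u(2) by (auto simp: X_def less_Suc_eq)
  moreover have "\<forall>i<Suc r. cinner ((w(r := u)) i) ((w(r := u)) i) = 1"
    using w(1) u(1) by (auto simp: less_Suc_eq)
  ultimately show ?case by blast
qed

lemma exists_diagonalising_unit_vectors:
  fixes B :: "nat \<Rightarrow> complex^'n^'n"
  assumes sa: "\<And>l. l < d \<Longrightarrow> self_adjoint (B l)" and r: "d * r < CARD('n) + d"
  obtains w where "\<forall>i<r. cinner (w i) (w i) = 1"
    "\<And>A i j. A \<in> span (B ` {..<d}) \<Longrightarrow> i < r \<Longrightarrow> j < r \<Longrightarrow> i \<noteq> j \<Longrightarrow> cinner (w i) (A *v w j) = 0"
proof -
  obtain w where unit: "\<forall>i<r. cinner (w i) (w i) = 1"
    and w: "\<forall>i<r. \<forall>i'<i. \<forall>l<d. cinner (B l *v w i') (w i) = 0"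
    using greedy_unit_vectors[OF r] by blast
  \<comment> \<open>self-adjointness turns the one-sided orthogonality of the greedy choice into a two-sided one\<close>
  have basis: "cinner (w i) (B l *v w j) = 0" if "i < r" "j < r" "i \<noteq> j" "l < d" for i j l
  proof (cases "j < i")
    case True
    then have "cinner (B l *v w j) (w i) = 0" using w that by simp
    then show ?thesis using cnj_cinner[of "B l *v w j" "w i"] by simp
  next
    case False
    then show ?thesis using w that by (simp add: self_adjoint_cinner[OF sa])
  qed
  have "cinner (w i) (A *v w j) = 0"
    if "A \<in> span (B ` {..<d})" "i < r" "j < r" "i \<noteq> j" for A i j
  proof (rule linear_eq_0_on_span[OF _ _ that(1)])
    show "linear (\<lambda>A. cinner (w i) (A *v w j))"
      by (rule linearI) (simp_all add: matrix_vector_mult_add_rdistrib cinner_add_right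
          scaleR_matrix_vector_mult cinner_scaleR_right)
  qed (use basis that in auto)
  with unit show ?thesis using that by blast
qed

section \<open>Codes spanned by orthonormal families\<close>

lemma cspan_finite:
  assumes "finite V"
  shows "cspan V = {y. \<exists>c. y = (\<Sum>t\<in>V. c t *s t)}"
proof (intro equalityI subsetI)
  fix y assume "y \<in> cspan V"
  then obtain T c where T: "finite T" "T \<subseteq> V" "y = (\<Sum>t\<in>T. c t *s t)"
    unfolding cspan_def by auto
  have "(\<Sum>t\<in>V. (if t \<in> T then c t else 0) *s t) = (\<Sum>t\<in>V. if t \<in> T then c t *s t else 0)"
    by (rule sum.cong) auto
  also have "\<dots> = (\<Sum>t\<in>V \<inter> T. c t *s t)" by (rule sum.inter_restrict[OF assms, symmetric])
  also have "V \<inter> T = T" using T(2) by blast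
  finally have "y = (\<Sum>t\<in>V. (if t \<in> T then c t else 0) *s t)" using T(3) by simp
  then show "y \<in> {y. \<exists>c. y = (\<Sum>t\<in>V. c t *s t)}" by (intro CollectI) (rule exI, assumption)
next
  fix y assume "y \<in> {y. \<exists>c. y = (\<Sum>t\<in>V. c t *s t)}"
  then show "y \<in> cspan V" using assms unfolding cspan_def by blast
qed

lemma cspan_eq_vec_span:
  assumes "finite V"
  shows "cspan V = vec.span V"
  by (auto simp: cspan_finite[OF assms] vec.span_finite[OF assms])

lemma csubspace_cspan_finite:
  assumes "finite V"
  shows "csubspace (cspan V)"
  using vec.subspace_span[of V]
  by (simp add: cspan_eq_vec_span[OF assms] csubspace_def vec.subspace_def)

lemma orth_proj_eqI:
  assumes C: "csubspace C" and P: "is_orth_proj C P"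
  shows "orth_proj C = P"
  unfolding orth_proj_def
proof (rule the_equality[where P = "is_orth_proj C", OF P])
  fix Q assume Q: "is_orth_proj C Q"
  have "Q *v x = P *v x" for x
  proof -
    define z where "z = Q *v x - P *v x"
    have "z = Q *v x + (-1) *s (P *v x)" by (simp add: z_def vec_eq_iff)
    moreover have "P *v x \<in> C" "Q *v x \<in> C" using P Q by (auto simp: is_orth_proj_def)
    ultimately have "z \<in> C" using C unfolding csubspace_def by blast
    have "cinner z z = cinner z ((x - P *v x) - (x - Q *v x))"
      by (rule arg_cong[where f = "cinner z"]) (simp add: z_def)
    also have "\<dots> = cinner z (x - P *v x) - cinner z (x - Q *v x)"
      by (rule cinner_diff_right)
    also have "\<dots> = 0" using P Q \<open>z \<in> C\<close> by (simp add: is_orth_proj_def)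
    finally show ?thesis by (simp add: z_def)
  qed
  then show "Q = P" by (simp add: matrix_eq)
qed

lemma orth_proj_cspan_orthonormal:
  fixes V :: "(complex^'n) set"
  assumes fin: "finite V"
    and orth: "\<And>s t. s \<in> V \<Longrightarrow> t \<in> V \<Longrightarrow> cinner s t = (if s = t then 1 else 0)"
  shows "orth_proj (cspan V) *v x = (\<Sum>t\<in>V. cinner t x *s t)"
proof -
  define P :: "complex^'n^'n" where "P = (\<chi> i j. \<Sum>t\<in>V. t $ i * cnj (t $ j))"
  have Pv: "P *v x = (\<Sum>t\<in>V. cinner t x *s t)" for x
    by (simp add: vec_eq_iff P_def matrix_vector_mult_def cinner_def sum_distrib_left
        sum_distrib_right sum.swap[of _ UNIV] algebra_simps)
  have fixes_V: "cinner s (P *v x) = cinner s x" if "s \<in> V" for s x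
  proof -
    have "cinner s (P *v x) = (\<Sum>t\<in>V. if s = t then cinner t x else 0)"
      by (auto simp: Pv cinner_sum_right cinner_smult_right orth that intro!: sum.cong)
    then show ?thesis using fin that by simp
  qed
  have "is_orth_proj (cspan V) P"
    unfolding is_orth_proj_def
  proof (intro allI conjI ballI)
    fix x
    show "P *v x \<in> cspan V" unfolding cspan_finite[OF fin] Pv by (intro CollectI exI[of _ "\<lambda>t. cinner t x"]) simp
    fix y assume "y \<in> cspan V"
    then obtain c where "y = (\<Sum>t\<in>V. c t *s t)" unfolding cspan_finite[OF fin] by blast
    then show "cinner y (x - P *v x) = 0"
      by (simp add: cinner_sum_left cinner_smult_left cinner_diff_right fixes_V cong: sum.cong)
  qed
  then show ?thesis
    using orth_proj_eqI[OF csubspace_cspan_finite[OF fin]] Pv by simp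
qed

lemma card_le_cdim_cspan_orthonormal:
  assumes fin: "finite V"
    and orth: "\<And>s t. s \<in> V \<Longrightarrow> t \<in> V \<Longrightarrow> cinner s t = (if s = t then 1 else 0)"
  shows "card V \<le> cdim (cspan V)"
proof -
  obtain B where B: "finite B" "card B = cdim (cspan V)" "cspan B = cspan V"
    using LeastI_ex[of "\<lambda>k. \<exists>B. finite B \<and> card B = k \<and> cspan B = cspan V"] fin
    unfolding cdim_def by blast
  have "V \<subseteq> vec.span B"
    using vec.span_superset[of V] B(1,3) fin by (simp add: cspan_eq_vec_span)
  moreover have "vec.independent V"
    unfolding vec.independent_explicit_module
  proof (intro allI impI)
    fix T u t0 assume T: "finite T" "T \<subseteq> V" "(\<Sum>t\<in>T. u t *s t) = 0" "t0 \<in> T"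
    have "0 = cinner t0 (\<Sum>t\<in>T. u t *s t)" using T(3) by simp
    also have "\<dots> = (\<Sum>t\<in>T. u t * cinner t0 t)" by (simp add: cinner_sum_right cinner_smult_right)
    also have "\<dots> = (\<Sum>t\<in>T. if t0 = t then u t else 0)"
    proof (rule sum.cong[OF refl])
      fix t assume "t \<in> T"
      then have "t \<in> V" "t0 \<in> V" using T(2,4) by auto
      then show "u t * cinner t0 t = (if t0 = t then u t else 0)" by (simp add: orth)
    qed
    also have "\<dots> = u t0" using T(1,4) by simp
    finally show "u t0 = 0" by simp
  qed
  ultimately show ?thesis using vec.independent_span_bound[OF B(1)] B(2) by simp
qed

lemma is_code_cspan_orthonormal:
  assumes fin: "finite V"
    and orth: "\<And>s t. s \<in> V \<Longrightarrow> t \<in> V \<Longrightarrow> cinner s t = (if s = t then 1 else 0)"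
    and diag: "\<And>A s t. A \<in> E \<Longrightarrow> s \<in> V \<Longrightarrow> t \<in> V \<Longrightarrow>
      cinner s (A *v t) = (if s = t then complex_of_real (\<epsilon> A) else 0)"
  shows "is_code E (cspan V)"
proof -
  define P where "P = orth_proj (cspan V)"
  have Pv: "P *v x = (\<Sum>t\<in>V. cinner t x *s t)" for x
    unfolding P_def by (rule orth_proj_cspan_orthonormal[OF fin orth])
  have "P ** A ** P = \<epsilon> A *\<^sub>R P" if A: "A \<in> E" for A
  proof -
    have key: "cinner s (A *v (P *v x)) = complex_of_real (\<epsilon> A) * cinner s x" if "s \<in> V" for s x
    proof -
      have "cinner s (A *v (P *v x)) = (\<Sum>t\<in>V. if s = t then cinner t x * complex_of_real (\<epsilon> A) else 0)"
        by (auto simp: Pv matrix_vector_mult_sum vector_scalar_commute cinner_sum_right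
            cinner_smult_right diag[OF A that] intro!: sum.cong)
      then show ?thesis using fin that by (simp add: mult.commute)
    qed
    have "(P ** A ** P) *v x = (\<epsilon> A *\<^sub>R P) *v x" for x
    proof -
      have "(P ** A ** P) *v x = P *v (A *v (P *v x))"
        by (simp add: matrix_vector_mul_assoc matrix_mul_assoc)
      also have "\<dots> = (\<Sum>t\<in>V. (complex_of_real (\<epsilon> A) * cinner t x) *s t)"
        by (subst Pv) (rule sum.cong, simp_all add: key)
      also have "\<dots> = complex_of_real (\<epsilon> A) *s (P *v x)"
        by (simp add: Pv vec.scale_sum_right vector_smult_assoc)
      also have "\<dots> = (\<epsilon> A *\<^sub>R P) *v x"
        by (simp only: scaleR_matrix_vector_mult scaleR_vec_eq_smult)
      finally show ?thesis .
    qed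
    then show ?thesis by (simp add: matrix_eq)
  qed
  then show ?thesis
    unfolding is_code_def P_def using csubspace_cspan_finite[OF fin] by blast
qed

lemma exists_code_orthonormal_family:
  fixes v :: "nat \<Rightarrow> complex^'n"
  assumes orth: "\<And>q q'. q < k \<Longrightarrow> q' < k \<Longrightarrow> cinner (v q) (v q') = (if q = q' then 1 else 0)"
    and diag: "\<And>A q q'. A \<in> E \<Longrightarrow> q < k \<Longrightarrow> q' < k \<Longrightarrow>
      cinner (v q) (A *v v q') = (if q = q' then complex_of_real (\<epsilon> A) else 0)"
  shows "\<exists>C. is_code E C \<and> k \<le> cdim C"
proof -
  have inj: "inj_on v {..<k}"
    using orth by (intro inj_onI) (metis lessThan_iff one_neq_zero)
  have orth_image: "cinner s t = (if s = t then 1 else 0)" if "s \<in> v ` {..<k}" "t \<in> v ` {..<k}" for s t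
    using that orth by (auto simp: inj_on_eq_iff[OF inj])
  have "is_code E (cspan (v ` {..<k}))"
    by (rule is_code_cspan_orthonormal[of "v ` {..<k}", OF _ orth_image])
      (use diag inj in \<open>auto simp: inj_on_eq_iff\<close>)
  moreover have "k \<le> cdim (cspan (v ` {..<k}))"
    using card_le_cdim_cspan_orthonormal[of "v ` {..<k}", OF _ orth_image] card_image[OF inj] by simp
  ultimately show ?thesis by blast
qed

section \<open>Construction of the code\<close>

lemma cinner_sums_diagonal:
  fixes w :: "'i \<Rightarrow> complex^'n"
  assumes fin: "finite I" "finite J"
    and off: "\<And>i j. i \<in> I \<Longrightarrow> j \<in> J \<Longrightarrow> i \<noteq> j \<Longrightarrow> cinner (w i) (A *v w j) = 0"
  shows "cinner (\<Sum>i\<in>I. a i *s w i) (A *v (\<Sum>j\<in>J. b j *s w j))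
    = (\<Sum>i\<in>I \<inter> J. cnj (a i) * b i * cinner (w i) (A *v w i))"
proof -
  have "cinner (\<Sum>i\<in>I. a i *s w i) (A *v (\<Sum>j\<in>J. b j *s w j))
      = (\<Sum>i\<in>I. cnj (a i) * cinner (w i) (A *v (\<Sum>j\<in>J. b j *s w j)))"
    by (simp add: cinner_sum_left cinner_smult_left)
  also have "\<dots> = (\<Sum>i\<in>I. cnj (a i) * (\<Sum>j\<in>J. b j * cinner (w i) (A *v w j)))"
    by (simp add: matrix_vector_mult_sum vector_scalar_commute cinner_sum_right cinner_smult_right)
  also have "\<dots> = (\<Sum>i\<in>I. if i \<in> J then cnj (a i) * b i * cinner (w i) (A *v w i) else 0)"
  proof (rule sum.cong[OF refl])
    fix i assume "i \<in> I"
    then have "(\<Sum>j\<in>J. b j * cinner (w i) (A *v w j)) = (\<Sum>j\<in>J. if j = i then b i * cinner (w i) (A *v w i) else 0)"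
      using off by (intro sum.cong) auto
    then show "cnj (a i) * (\<Sum>j\<in>J. b j * cinner (w i) (A *v w j))
        = (if i \<in> J then cnj (a i) * b i * cinner (w i) (A *v w i) else 0)"
      using fin(2) by (simp add: mult.assoc)
  qed
  also have "\<dots> = (\<Sum>i\<in>I \<inter> J. cnj (a i) * b i * cinner (w i) (A *v w i))"
    by (simp add: sum.inter_restrict[OF fin(1)])
  finally show ?thesis .
qed

lemma cinner_partition_sums:
  fixes w :: "nat \<Rightarrow> complex^'n" and p :: "nat \<Rightarrow> 'a"
  assumes off: "\<And>i j. i < r \<Longrightarrow> j < r \<Longrightarrow> i \<noteq> j \<Longrightarrow> cinner (w i) (A *v w j) = 0"
    and \<nu>: "\<forall>j<r. 0 \<le> \<nu> j"
  shows "cinner (\<Sum>j\<in>{j\<in>{..<r}. p j = q}. complex_of_real (sqrt (\<nu> j)) *s w j)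
      (A *v (\<Sum>j\<in>{j\<in>{..<r}. p j = q'}. complex_of_real (sqrt (\<nu> j)) *s w j))
    = (if q = q' then \<Sum>j\<in>{j\<in>{..<r}. p j = q}. complex_of_real (\<nu> j) * cinner (w j) (A *v w j) else 0)"
proof -
  have "{j\<in>{..<r}. p j = q} \<inter> {j\<in>{..<r}. p j = q'} = (if q = q' then {j\<in>{..<r}. p j = q} else {})"
    by auto
  then show ?thesis
    using \<nu> by (subst cinner_sums_diagonal) (auto intro: off simp flip: of_real_mult intro!: sum.cong)
qed

lemma code_from_balanced_partition:
  fixes w :: "nat \<Rightarrow> complex^'n" and B :: "nat \<Rightarrow> complex^'n^'n"
  assumes E: "quantum_graph E" and B: "B ` {..<d} \<subseteq> E" "E \<subseteq> span (B ` {..<d})"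
    and unit: "\<forall>j<r. cinner (w j) (w j) = 1"
    and off: "\<And>A i j. A \<in> E \<Longrightarrow> i < r \<Longrightarrow> j < r \<Longrightarrow> i \<noteq> j \<Longrightarrow> cinner (w i) (A *v w j) = 0"
    and part: "\<forall>j<r. p j < k \<and> 0 \<le> \<nu> j" "\<forall>q<k. (\<Sum>j\<in>{j\<in>{..<r}. p j = q}. \<nu> j) = 1"
    and balanced: "\<forall>q<k. \<forall>l<d.
      (\<Sum>j\<in>{j\<in>{..<r}. p j = q}. \<nu> j * Re (cinner (w j) (B l *v w j))) =
      (\<Sum>j\<in>{j\<in>{..<r}. p j = 0}. \<nu> j * Re (cinner (w j) (B l *v w j)))"
    and k: "1 \<le> k"
  shows "\<exists>C. is_code E C \<and> k \<le> cdim C"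
proof -
  have sa: "\<And>A. A \<in> E \<Longrightarrow> self_adjoint A" and I: "mat 1 \<in> E"
    using E by (auto simp: quantum_graph_def)
  define v where "v q = (\<Sum>j\<in>{j\<in>{..<r}. p j = q}. complex_of_real (sqrt (\<nu> j)) *s w j)" for q
  \<comment> \<open>\<open>H q A\<close> is the compression of \<open>A\<close> to \<open>v q\<close>\<close>
  define H where "H q A = (\<Sum>j\<in>{j\<in>{..<r}. p j = q}. complex_of_real (\<nu> j) * cinner (w j) (A *v w j))"
    for q A
  have v_cinner: "cinner (v q) (A *v v q') = (if q = q' then H q A else 0)" if "A \<in> E" for A q q'
    unfolding v_def H_def using part(1) by (intro cinner_partition_sums off[OF that]) auto
  have H_real: "H q A = complex_of_real (\<Sum>j\<in>{j\<in>{..<r}. p j = q}. \<nu> j * Re (cinner (w j) (A *v w j)))"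
    if "A \<in> E" for q A
    unfolding H_def by (subst self_adjoint_cinner_real[OF sa[OF that]]) simp
  have H_const: "H q A = H 0 A" if "A \<in> E" "q < k" for q A
  proof (rule linear_eq_0_on_span[of "\<lambda>A. H q A - H 0 A", simplified, OF _ _ subsetD[OF B(2) that(1)]])
    show "linear (\<lambda>A. H q A - H 0 A)"
      by (rule linearI) (simp_all add: H_def matrix_vector_mult_add_rdistrib cinner_add_right
          scaleR_matrix_vector_mult cinner_scaleR_right distrib_left sum.distrib
          scaleR_sum_right algebra_simps)
    show "H q b = H 0 b" if b: "b \<in> B ` {..<d}" for b
    proof -
      obtain l where l: "l < d" "b = B l" using b by blast
      then have "b \<in> E" using B(1) by blast
      then show ?thesis using balanced[rule_format, OF \<open>q < k\<close> l(1)] l(2) by (simp add: H_real)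
    qed
  qed
  have H_1: "H 0 (mat 1) = 1"
    using unit part k by (simp add: H_def sum.cong[of _ _ _ "\<lambda>j. complex_of_real (\<nu> j)"] flip: of_real_sum)
  define \<epsilon> where "\<epsilon> A = Re (H 0 A)" for A
  have orth: "cinner (v q) (v q') = (if q = q' then 1 else 0)" if "q < k" "q' < k" for q q'
    using v_cinner[OF I, of q q'] H_const[OF I that(1)] H_const[OF I that(2)] H_1 by simp
  have diag: "cinner (v q) (A *v v q') = (if q = q' then complex_of_real (\<epsilon> A) else 0)"
    if "A \<in> E" "q < k" "q' < k" for A q q'
    using v_cinner[OF that(1), of q q'] H_const[OF that(1,2)] H_const[OF that(1,3)] H_real[OF that(1)]
    by (simp add: \<epsilon>_def)
  show ?thesis by (rule exists_code_orthonormal_family[OF orth diag])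
qed

lemma exists_indexed_basis:
  fixes S :: "'a::euclidean_space set"
  obtains B where "B ` {..<dim S} \<subseteq> S" "inj_on B {..<dim S}" "S \<subseteq> span (B ` {..<dim S})"
proof -
  obtain Bs where Bs: "Bs \<subseteq> S" "independent Bs" "S \<subseteq> span Bs" "card Bs = dim S"
    using basis_exists by blast
  obtain B where "bij_betw B {..<dim S} Bs"
    using ex_bij_betw_nat_finite[of Bs] independent_bound[OF Bs(2)] Bs(4) by (auto simp: atLeast0LessThan)
  then show ?thesis using that Bs by (auto simp: bij_betw_def)
qed

lemma span_image_sum:
  fixes B :: "nat \<Rightarrow> 'a::real_vector"
  assumes "inj_on B {..<d}" "x \<in> span (B ` {..<d})"
  obtains \<gamma> where "x = (\<Sum>l<d. \<gamma> l *\<^sub>R B l)"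
proof -
  have "span (B ` {..<d}) = range (\<lambda>u. \<Sum>b\<in>B ` {..<d}. u b *\<^sub>R b)"
    by (intro span_finite finite_imageI finite_lessThan)
  then have "x \<in> range (\<lambda>u. \<Sum>b\<in>B ` {..<d}. u b *\<^sub>R b)" using assms(2) by simp
  then obtain u where "x = (\<Sum>b\<in>B ` {..<d}. u b *\<^sub>R b)" by blast
  then show ?thesis using that[of "u \<circ> B"] by (simp add: sum.reindex[OF assms(1)])
qed

lemma diagonal_functional_of_identity:
  fixes B :: "nat \<Rightarrow> complex^'n^'n"
  assumes "inj_on B {..<d}" "mat 1 \<in> span (B ` {..<d})"
  obtains \<gamma> where "\<And>x. (\<Sum>l<d. \<gamma> l * Re (cinner x (B l *v x))) = Re (cinner x x)"
proof -
  obtain \<gamma> where \<gamma>: "mat 1 = (\<Sum>l<d. \<gamma> l *\<^sub>R B l)" using span_image_sum[OF assms] .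
  have "Re (cinner x x) = (\<Sum>l<d. \<gamma> l * Re (cinner x (B l *v x)))" for x
    by (subst (2) matrix_vector_mul_lid[symmetric], subst \<gamma>)
      (simp add: sum_matrix_vector_mult scaleR_matrix_vector_mult cinner_sum_right cinner_scaleR_right)
  then show ?thesis using that by simp
qed

lemma quantum_graph_dim_pos:
  assumes "quantum_graph (E :: (complex^'n^'n) set)"
  shows "0 < dim E"
proof -
  have "(mat 1 :: complex^'n^'n) \<noteq> 0" by (simp add: vec_eq_iff mat_def)
  then have "\<not> E \<subseteq> {0}" using assms by (auto simp: quantum_graph_def)
  then show ?thesis unfolding neq0_conv[symmetric] dim_eq_0 .
qed

lemma nat_ceiling_divide_square:
  fixes n d :: nat
  assumes "0 < n" "0 < d"
  defines "k \<equiv> nat \<lceil>real n / (real d)\<^sup>2\<rceil>"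
  shows "1 \<le> k" "(k - 1) * d * d < n"
proof -
  have q: "0 < real n / (real d)\<^sup>2" using assms by simp
  then show "1 \<le> k" unfolding k_def by linarith
  have "real (k - 1) < real n / (real d)\<^sup>2"
    unfolding k_def using q by (simp add: of_nat_diff) linarith
  then have "real (k - 1) * (real d)\<^sup>2 < real n" using assms by (simp add: field_simps)
  then show "(k - 1) * d * d < n" by (simp add: power2_eq_square flip: of_nat_mult) 
qed

lemma code_from_diagonalising_vectors:
  fixes w :: "nat \<Rightarrow> complex^'n" and B :: "nat \<Rightarrow> complex^'n^'n"
  assumes E: "quantum_graph E" and B: "B ` {..<d} \<subseteq> E" "inj_on B {..<d}" "E \<subseteq> span (B ` {..<d})"
    and k: "1 \<le> k" "d * (k - 1) \<le> CARD('n)" and r: "(k - 1) * d < r"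
    and unit: "\<forall>j<r. cinner (w j) (w j) = 1"
    and off: "\<And>A i j. A \<in> E \<Longrightarrow> i < r \<Longrightarrow> j < r \<Longrightarrow> i \<noteq> j \<Longrightarrow> cinner (w i) (A *v w j) = 0"
  shows "\<exists>C. is_code E C \<and> k \<le> cdim C"
proof -
  have "mat 1 \<in> span (B ` {..<d})" using E B(3) by (auto simp: quantum_graph_def)
  then obtain \<gamma> where \<gamma>: "\<And>x. (\<Sum>l<d. \<gamma> l * Re (cinner x (B l *v x))) = Re (cinner x x)"
    using diagonal_functional_of_identity[OF B(2)] by blast
  \<comment> \<open>the diagonals of the \<open>w j\<close> are \<open>r\<close> points of \<open>\<real>\<^sup>d\<close> on a common hyperplane\<close>
  have "(\<Sum>l<d. \<gamma> l * Re (cinner (w j) (B l *v w j))) = 1" if "j < r" for j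
    using \<gamma>[of "w j"] unit that by simp
  then obtain p \<nu> where "\<forall>j<r. p j < k \<and> 0 \<le> \<nu> j" "\<forall>q<k. (\<Sum>j\<in>{j\<in>{..<r}. p j = q}. \<nu> j) = 1"
    "\<forall>q<k. \<forall>l<d. (\<Sum>j\<in>{j\<in>{..<r}. p j = q}. \<nu> j * Re (cinner (w j) (B l *v w j))) =
        (\<Sum>j\<in>{j\<in>{..<r}. p j = 0}. \<nu> j * Re (cinner (w j) (B l *v w j)))"
    by (rule tverberg_hyperplane[where a = "\<lambda>j l. Re (cinner (w j) (B l *v w j))", OF k(1) r k(2)])
  then show ?thesis using code_from_balanced_partition[OF E B(1,3) unit off _ _ _ k(1)] by blast
qed

theorem proposition3:
  fixes E :: "(complex ^ 'n ^ 'n) set"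
  assumes "quantum_graph E"
  shows "\<exists>C. is_code E C \<and>
           real (cdim C) \<ge> real_of_int \<lceil>real CARD('n) / (real (dim E - 1) + 1)^2\<rceil>"
proof -
  define d where "d = dim E"
  define k where "k = nat \<lceil>real CARD('n) / (real d)\<^sup>2\<rceil>"
  define r where "r = (k - 1) * d + 1"
  have d: "0 < d" using quantum_graph_dim_pos[OF assms] by (simp add: d_def)
  then have k: "1 \<le> k" "(k - 1) * d * d < CARD('n)"
    using nat_ceiling_divide_square[of "CARD('n)" d] by (simp_all add: k_def)
  obtain B where B: "B ` {..<d} \<subseteq> E" "inj_on B {..<d}" "E \<subseteq> span (B ` {..<d})"
    using exists_indexed_basis[of E] unfolding d_def by blast
  have "\<And>l. l < d \<Longrightarrow> self_adjoint (B l)" using assms B(1) by (auto simp: quantum_graph_def)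
  moreover have "d * r < CARD('n) + d" using k(2) by (simp add: r_def algebra_simps)
  ultimately obtain w where unit: "\<forall>j<r. cinner (w j) (w j) = 1" and diagonal:
    "\<And>A i j. A \<in> span (B ` {..<d}) \<Longrightarrow> i < r \<Longrightarrow> j < r \<Longrightarrow> i \<noteq> j \<Longrightarrow> cinner (w i) (A *v w j) = 0"
    using exists_diagonalising_unit_vectors[where B = B and d = d and r = r] by blast
  have "d * (k - 1) \<le> CARD('n)"
    using k(2) d by (metis dual_order.trans le_square less_or_eq_imp_le mult.assoc mult.commute mult_le_mono2)
  moreover have "(k - 1) * d < r" by (simp add: r_def)
  ultimately obtain C where "is_code E C" "k \<le> cdim C"
    using code_from_diagonalising_vectors[OF assms B k(1) _ _ unit] diagonal B(3) by blast
  moreover have "real (dim E - 1) + 1 = real d" using d by (simp add: d_def of_nat_diff)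
  moreover have "real_of_int \<lceil>real CARD('n) / (real d)\<^sup>2\<rceil> = real k" using k(1) by (simp add: k_def)
  ultimately show ?thesis by auto
qed

end
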